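(* Let $A$ be a Lie conformal algebra and $M$ an $A$-module with a commutative associative product such that $\partial^M$ and all $a_\lambda$ act by derivations. For every $\xi\in\tilde\Gamma_1(A,M)$, the contraction $\iota_\xi$ is an odd derivation of degree $-1$ of the superalgebra $(\tilde\Gamma^\bullet(A,M),\wedge)$: $\iota_\xi(\tilde\alpha\wedge\tilde\beta)=\iota_\xi(\tilde\alpha)\wedge\tilde\beta+(-1)^h\tilde\alpha\wedge\iota_\xi(\tilde\beta)$ for $\tilde\alpha\in\tilde\Gamma^h$, $\tilde\beta\in\tilde\Gamma^k$.
   Context: $\mathbb F$ field of characteristic 0. $\tilde\Gamma^k$: $\mathbb F$-linear $\tilde\gamma:A^{\otimes k}\to\mathbb F[\lambda_1..\lambda_k]\otimes M$ with $\tilde\gamma(..,\partial a_i,..)=-\lambda_i\tilde\gamma(..)$ and skew-symmetric under simultaneous permutation of $a_i$ and $\lambda_i$ ($\tilde\Gamma^0=M$). Exterior product: $(\tilde\alpha\wedge\tilde\beta)_{\lambda_1..\lambda_{h+k}}(a_1..a_{h+k})=\sum_{\sigma\in S_{h+k}}\frac{\mathrm{sign}\sigma}{h!k!}\tilde\alpha_{\lambda_{\sigma(1)}..\lambda_{\sigma(h)}}(a_{\sigma(1)}..a_{\sigma(h)})\tilde\beta_{\lambda_{\sigma(h+1)}..\lambda_{\sigma(h+k)}}(a_{\sigma(h+1)}..a_{\sigma(h+k)})$. $\tilde\Gamma_1$: quotient of $A\otimes\mathrm{Hom}_{\mathbb F}(\mathbb F[\lambda],M)$ by $\partial a\otimes\phi=-a\otimes\lambda^*\phi$,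 $(\lambda^*\phi)(f)=\phi(\lambda f)$. For $\xi$ represented by $a_1\otimes\phi$: $(\iota_\xi\tilde\gamma)_{\lambda_2..\lambda_k}(a_2..a_k)=\phi^\mu(\tilde\gamma_{\lambda_1,..,\lambda_k}(a_1,..,a_k))$, where $\phi^\mu(f(\lambda_1)\otimes m)=\phi(f)m$ coefficientwise in $\lambda_2,..,\lambda_k$; $\iota_\xi=0$ on $\tilde\Gamma^0$. *)

theory Defs
  imports Complex_Main "HOL-Library.Poly_Mapping" "HOL-Combinatorics.Permutations"
begin

text \<open>The field F is a type 'f of class field_char_0.
  F[lambda] (x) V is encoded as nat =>0 V (coefficient of lambda^n).
  F[lambda_0 .. lambda_(k-1)] (x) M is encoded as (nat =>0 nat) =>0 M
  (coefficient of the monomial with exponent vector e); variables are 0-indexed.\<close>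

type_synonym 'v mpoly = "(nat \<Rightarrow>\<^sub>0 nat) \<Rightarrow>\<^sub>0 'v"

definition lie_conformal_algebra ::
  "('f::field_char_0 \<Rightarrow> 'a::ab_group_add \<Rightarrow> 'a) \<Rightarrow> ('a \<Rightarrow> 'a) \<Rightarrow> ('a \<Rightarrow> 'a \<Rightarrow> (nat \<Rightarrow>\<^sub>0 'a)) \<Rightarrow> bool"
where
  "lie_conformal_algebra sA DA br \<longleftrightarrow>
     Vector_Spaces.vector_space sA \<and> Vector_Spaces.linear sA sA DA \<and>
     (\<forall>b n. Vector_Spaces.linear sA sA (\<lambda>a. Poly_Mapping.lookup (br a b) n)) \<and>
     (\<forall>a n. Vector_Spaces.linear sA sA (\<lambda>b. Poly_Mapping.lookup (br a b) n)) \<and>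
     \<comment> \<open>sesquilinearity: [d a_lambda b] = - lambda [a_lambda b], [a_lambda d b] = (d + lambda)[a_lambda b]\<close>
     (\<forall>a b n. Poly_Mapping.lookup (br (DA a) b) n = - (if n = 0 then 0 else Poly_Mapping.lookup (br a b) (n - 1))) \<and>
     (\<forall>a b n. Poly_Mapping.lookup (br a (DA b)) n =
        DA (Poly_Mapping.lookup (br a b) n) + (if n = 0 then 0 else Poly_Mapping.lookup (br a b) (n - 1))) \<and>
     \<comment> \<open>skew-symmetry: [b_lambda a] = - [a_(-lambda-d) b]\<close>
     (\<forall>a b i. Poly_Mapping.lookup (br b a) i =
        - (\<Sum>q\<in>Poly_Mapping.keys (br a b). if i \<le> q
             then sA ((-1) ^ q * of_nat (q choose i)) ((DA ^^ (q - i)) (Poly_Mapping.lookup (br a b) q))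
             else 0)) \<and>
     \<comment> \<open>Jacobi: [a_lambda [b_mu c]] - [b_mu [a_lambda c]] = [[a_lambda b]_(lambda+mu) c],
         compared coefficientwise at lambda^i mu^j\<close>
     (\<forall>a b c i j.
        Poly_Mapping.lookup (br a (Poly_Mapping.lookup (br b c) j)) i - Poly_Mapping.lookup (br b (Poly_Mapping.lookup (br a c) i)) j =
        (\<Sum>p\<le>i. sA (of_nat ((i - p + j) choose (i - p)))
                    (Poly_Mapping.lookup (br (Poly_Mapping.lookup (br a b) p) c) (i - p + j))))"

definition lca_module ::
  "('f::field_char_0 \<Rightarrow> 'a::ab_group_add \<Rightarrow> 'a) \<Rightarrow> ('a \<Rightarrow> 'a) \<Rightarrow> ('a \<Rightarrow> 'a \<Rightarrow> (nat \<Rightarrow>\<^sub>0 'a)) \<Rightarrow>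
   ('f \<Rightarrow> 'm::ab_group_add \<Rightarrow> 'm) \<Rightarrow> ('m \<Rightarrow> 'm) \<Rightarrow> ('a \<Rightarrow> 'm \<Rightarrow> (nat \<Rightarrow>\<^sub>0 'm)) \<Rightarrow> bool"
where
  "lca_module sA DA br sM DM act \<longleftrightarrow>
     Vector_Spaces.vector_space sM \<and> Vector_Spaces.linear sM sM DM \<and>
     (\<forall>m n. Vector_Spaces.linear sA sM (\<lambda>a. Poly_Mapping.lookup (act a m) n)) \<and>
     (\<forall>a n. Vector_Spaces.linear sM sM (\<lambda>m. Poly_Mapping.lookup (act a m) n)) \<and>
     (\<forall>a m n. Poly_Mapping.lookup (act (DA a) m) n = - (if n = 0 then 0 else Poly_Mapping.lookup (act a m) (n - 1))) \<and>
     (\<forall>a m n. Poly_Mapping.lookup (act a (DM m)) n =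
        DM (Poly_Mapping.lookup (act a m) n) + (if n = 0 then 0 else Poly_Mapping.lookup (act a m) (n - 1))) \<and>
     \<comment> \<open>a_lambda (b_mu m) - b_mu (a_lambda m) = [a_lambda b]_(lambda+mu) m, coefficient of lambda^i mu^j\<close>
     (\<forall>a b m i j.
        Poly_Mapping.lookup (act a (Poly_Mapping.lookup (act b m) j)) i - Poly_Mapping.lookup (act b (Poly_Mapping.lookup (act a m) i)) j =
        (\<Sum>p\<le>i. sM (of_nat ((i - p + j) choose (i - p)))
                    (Poly_Mapping.lookup (act (Poly_Mapping.lookup (br a b) p) m) (i - p + j))))"

text \<open>The commutative associative product of M (the ring multiplication of the type 'm)
  is F-bilinear, and d^M and all a_lambda act on it by derivations.\<close>

definition derivation_product ::
  "('f::field_char_0 \<Rightarrow> 'm::comm_ring \<Rightarrow> 'm) \<Rightarrow> ('m \<Rightarrow> 'm) \<Rightarrow> ('a \<Rightarrow> 'm \<Rightarrow> (nat \<Rightarrow>\<^sub>0 'm)) \<Rightarrow> bool"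
where
  "derivation_product sM DM act \<longleftrightarrow>
     (\<forall>c x y. sM c (x * y) = sM c x * y) \<and>
     (\<forall>x y. DM (x * y) = DM x * y + x * DM y) \<and>
     (\<forall>a x y n. Poly_Mapping.lookup (act a (x * y)) n = Poly_Mapping.lookup (act a x) n * y + x * Poly_Mapping.lookup (act a y) n)"

definition psmul :: "('f \<Rightarrow> 'm::zero \<Rightarrow> 'm) \<Rightarrow> 'f \<Rightarrow> 'm mpoly \<Rightarrow> 'm mpoly" where
  "psmul sM c P = Poly_Mapping.map (sM c) P"

definition lam_mul :: "nat \<Rightarrow> 'm::comm_monoid_add mpoly \<Rightarrow> 'm mpoly" where
  "lam_mul i P = (\<Sum>e\<in>Poly_Mapping.keys P. Poly_Mapping.single (e + Poly_Mapping.single i 1) (Poly_Mapping.lookup P e))"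

definition ren_exp :: "(nat \<Rightarrow> nat) \<Rightarrow> (nat \<Rightarrow>\<^sub>0 nat) \<Rightarrow> (nat \<Rightarrow>\<^sub>0 nat)" where
  "ren_exp \<rho> e = (\<Sum>i\<in>Poly_Mapping.keys e. Poly_Mapping.single (\<rho> i) (Poly_Mapping.lookup e i))"

definition ren :: "(nat \<Rightarrow> nat) \<Rightarrow> 'm::comm_monoid_add mpoly \<Rightarrow> 'm mpoly" where
  "ren \<rho> P = (\<Sum>e\<in>Poly_Mapping.keys P. Poly_Mapping.single (ren_exp \<rho> e) (Poly_Mapping.lookup P e))"

text \<open>A cochain is a function on argument lists; as an element of tilde Gamma^k only its
  values on lists of length k matter.\<close>

definition Gamma ::
  "('f::field_char_0 \<Rightarrow> 'a::ab_group_add \<Rightarrow> 'a) \<Rightarrow> ('a \<Rightarrow> 'a) \<Rightarrow> ('f \<Rightarrow> 'm::ab_group_add \<Rightarrow> 'm) \<Rightarrow>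
   nat \<Rightarrow> ('a list \<Rightarrow> 'm mpoly) set"
where
  "Gamma sA DA sM k = {\<gamma>.
     \<comment> \<open>values in F[lambda_0..lambda_(k-1)] (x) M\<close>
     (\<forall>as. length as = k \<longrightarrow> (\<forall>e\<in>Poly_Mapping.keys (\<gamma> as). Poly_Mapping.keys e \<subseteq> {0..<k})) \<and>
     \<comment> \<open>F-linear in each argument\<close>
     (\<forall>as i e. length as = k \<longrightarrow> i < k \<longrightarrow>
        Vector_Spaces.linear sA sM (\<lambda>x. Poly_Mapping.lookup (\<gamma> (as[i := x])) e)) \<and>
     \<comment> \<open>gamma(.., d a_i, ..) = - lambda_i gamma(..)\<close>
     (\<forall>as i. length as = k \<longrightarrow> i < k \<longrightarrow>
        \<gamma> (as[i := DA (as ! i)]) = - lam_mul i (\<gamma> as)) \<and>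
     \<comment> \<open>skew-symmetry under simultaneous permutation of the a_i and lambda_i\<close>
     (\<forall>as \<sigma>. length as = k \<longrightarrow> \<sigma> permutes {0..<k} \<longrightarrow>
        ren \<sigma> (\<gamma> (List.map (\<lambda>i. as ! \<sigma> i) [0..<k])) = psmul sM (of_int (sign \<sigma>)) (\<gamma> as))}"

definition wedge ::
  "('f::field_char_0 \<Rightarrow> 'm::comm_ring \<Rightarrow> 'm) \<Rightarrow> nat \<Rightarrow> nat \<Rightarrow>
   ('a list \<Rightarrow> 'm mpoly) \<Rightarrow> ('a list \<Rightarrow> 'm mpoly) \<Rightarrow> 'a list \<Rightarrow> 'm mpoly"
where
  "wedge sM h k \<alpha> \<beta> as =
     (\<Sum>\<sigma>\<in>{\<sigma>. \<sigma> permutes {0..<h + k}}.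
        psmul sM (of_int (sign \<sigma>) / (fact h * fact k))
          (ren \<sigma> (\<alpha> (List.map (\<lambda>i. as ! \<sigma> i) [0..<h])) *
           ren (\<lambda>j. \<sigma> (h + j)) (\<beta> (List.map (\<lambda>j. as ! \<sigma> (h + j)) [0..<k]))))"

text \<open>An element of tilde Gamma_1 is represented by a finite sum of simple tensors a (x) phi,
  given as a list of pairs; phi in Hom_F(F[lambda],M) is given by its values phi(lambda^n).\<close>

definition shift_down :: "(nat \<Rightarrow>\<^sub>0 nat) \<Rightarrow> (nat \<Rightarrow>\<^sub>0 nat)" where
  "shift_down e = (\<Sum>i\<in>Poly_Mapping.keys e - {0}. Poly_Mapping.single (i - 1) (Poly_Mapping.lookup e i))"

text \<open>phi^mu applied in the variable lambda_0: f(lambda_0) m |-> phi(f) m\<close>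
definition contract :: "(nat \<Rightarrow> 'm::comm_ring) \<Rightarrow> 'm mpoly \<Rightarrow> 'm mpoly" where
  "contract \<phi> P = (\<Sum>e\<in>Poly_Mapping.keys P. Poly_Mapping.single (shift_down e) (\<phi> (Poly_Mapping.lookup e 0) * Poly_Mapping.lookup P e))"

definition iota ::
  "nat \<Rightarrow> ('a \<times> (nat \<Rightarrow> 'm::comm_ring)) list \<Rightarrow> ('a list \<Rightarrow> 'm mpoly) \<Rightarrow> 'a list \<Rightarrow> 'm mpoly"
where
  "iota k \<xi> \<gamma> as = (if k = 0 then 0
     else sum_list (List.map (\<lambda>(a, \<phi>). contract \<phi> (\<gamma> (a # as))) \<xi>))"

end

theory Submission
  imports Defs
begin

text \<open>
  Write the wedge product as a sum over \<open>\<sigma> \<in> S\<^sub>h\<^sub>+\<^sub>k\<close> and contract the new argument \<open>a\<close>,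
  which carries the variable \<open>\<lambda>\<^sub>0\<close>. Group the permutations according to the slot \<open>\<sigma>\<^sup>-\<^sup>1(0)\<close>
  into which \<open>a\<close> is inserted. By skew-symmetry of \<open>\<alpha>\<close> (resp. \<open>\<beta>\<close>), composing \<open>\<sigma>\<close> with a
  transposition inside the first \<open>h\<close> (resp. last \<open>k\<close>) slots does not change the summand, so
  the \<open>h\<close> groups with \<open>a\<close> in an \<open>\<alpha>\<close>-slot all equal the group with \<open>a\<close> in slot 0, and the \<open>k\<close>
  groups with \<open>a\<close> in a \<open>\<beta>\<close>-slot all equal the group with \<open>a\<close> in slot \<open>h\<close>. The first group is a
  wedge sum over \<open>S\<^sub>h\<^sub>+\<^sub>k\<^sub>-\<^sub>1\<close> for \<open>\<iota>\<^sub>\<xi>\<alpha>\<close>; the second becomes one for \<open>\<iota>\<^sub>\<xi>\<beta>\<close> after the cycle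
  \<open>(0 1 \<dots> h)\<close>, which contributes the sign \<open>(-1)\<^sup>h\<close>. The multiplicities \<open>h\<close> and \<open>k\<close> turn
  \<open>1/(h! k!)\<close> into \<open>1/((h-1)! k!)\<close> and \<open>1/(h! (k-1)!)\<close>.
\<close>

section \<open>Maps acting monomialwise on poly-mappings\<close>

definition map_monomials ::
  "('k \<Rightarrow> 'l) \<Rightarrow> ('k \<Rightarrow> 'v::zero \<Rightarrow> 'w::comm_monoid_add) \<Rightarrow> ('k \<Rightarrow>\<^sub>0 'v) \<Rightarrow> ('l \<Rightarrow>\<^sub>0 'w)"
where
  "map_monomials g f P =
     (\<Sum>e\<in>Poly_Mapping.keys P. Poly_Mapping.single (g e) (f e (Poly_Mapping.lookup P e)))"

lemma map_monomials_superset: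
  assumes "finite S" "Poly_Mapping.keys P \<subseteq> S" "\<And>e. f e 0 = 0"
  shows "map_monomials g f P = (\<Sum>e\<in>S. Poly_Mapping.single (g e) (f e (Poly_Mapping.lookup P e)))"
  unfolding map_monomials_def
  by (rule sum.mono_neutral_left) (use assms in \<open>auto simp: in_keys_iff\<close>)

lemma map_monomials_zero [simp]: "map_monomials g f 0 = 0"
  by (simp add: map_monomials_def)

lemma map_monomials_single:
  assumes "\<And>e. f e 0 = 0"
  shows "map_monomials g f (Poly_Mapping.single e x) = Poly_Mapping.single (g e) (f e x)"
  by (subst map_monomials_superset[where S="{e}"]) (use assms in auto)

lemma map_monomials_add:
  assumes "\<And>e. f e 0 = 0" "\<And>e x y. f e (x + y) = f e x + f e y"
  shows "map_monomials g f (P + Q) = map_monomials g f P + map_monomials g f Q"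
proof -
  let ?S = "Poly_Mapping.keys P \<union> Poly_Mapping.keys Q"
  let ?T = "\<lambda>R e. Poly_Mapping.single (g e) (f e (Poly_Mapping.lookup R e))"
  have "map_monomials g f (P + Q) = (\<Sum>e\<in>?S. ?T (P + Q) e)"
    by (rule map_monomials_superset) (use assms keys_add[of P Q] in auto)
  also have "\<dots> = (\<Sum>e\<in>?S. ?T P e) + (\<Sum>e\<in>?S. ?T Q e)"
    by (simp add: lookup_add assms single_add sum.distrib)
  also have "\<dots> = map_monomials g f P + map_monomials g f Q"
    by (subst (1 2) map_monomials_superset[where S="?S"]) (use assms in auto)
  finally show ?thesis .
qed

lemma map_monomials_sum:
  assumes "\<And>e. f e 0 = 0" "\<And>e x y. f e (x + y) = f e x + f e y"
  shows "map_monomials g f (\<Sum>i\<in>I. X i) = (\<Sum>i\<in>I. map_monomials g f (X i))"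
  by (induction I rule: infinite_finite_induct) (auto simp: map_monomials_add assms)

lemma poly_mapping_sum_single_lookup:
  "(\<Sum>e\<in>Poly_Mapping.keys P. Poly_Mapping.single e (Poly_Mapping.lookup P e)) = P"
  by (rule poly_mapping_eqI) (simp add: lookup_sum lookup_single when_def in_keys_iff)

lemma additive_poly_mapping_eqI:
  fixes F G :: "('k \<Rightarrow>\<^sub>0 'v::comm_monoid_add) \<Rightarrow> 'w::comm_monoid_add"
  assumes "\<And>P Q. F (P + Q) = F P + F Q" "F 0 = 0"
    and "\<And>P Q. G (P + Q) = G P + G Q" "G 0 = 0"
    and "\<And>e x. F (Poly_Mapping.single e x) = G (Poly_Mapping.single e x)"
  shows "F P = G P"
proof -
  have F_sum: "F (\<Sum>i\<in>I. X i) = (\<Sum>i\<in>I. F (X i))" for I and X :: "'k \<Rightarrow> _"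
    by (induction I rule: infinite_finite_induct) (auto simp: assms)
  have G_sum: "G (\<Sum>i\<in>I. X i) = (\<Sum>i\<in>I. G (X i))" for I and X :: "'k \<Rightarrow> _"
    by (induction I rule: infinite_finite_induct) (auto simp: assms)
  show ?thesis
    by (subst (1 2) poly_mapping_sum_single_lookup[symmetric]) (simp add: F_sum G_sum assms(5))
qed

section \<open>Renaming of variables and contraction\<close>

lemma ren_exp_eq_map_monomials: "ren_exp \<rho> = map_monomials \<rho> (\<lambda>_ x. x)"
  by (simp add: fun_eq_iff ren_exp_def map_monomials_def)

lemma ren_eq_map_monomials: "ren \<rho> = map_monomials (ren_exp \<rho>) (\<lambda>_ x. x)"
  by (simp add: fun_eq_iff ren_def map_monomials_def)

lemma contract_eq_map_monomials:
  "contract \<phi> = map_monomials shift_down (\<lambda>e x. \<phi> (Poly_Mapping.lookup e 0) * x)"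
  by (simp add: fun_eq_iff contract_def map_monomials_def)

lemma shift_down_eq_map_monomials:
  "shift_down = map_monomials (\<lambda>i. i - 1) (\<lambda>i x. if i = 0 then 0 else x)"
  unfolding shift_down_def map_monomials_def fun_eq_iff
  by (intro allI sum.mono_neutral_cong_left) auto

lemma ren_exp_add: "ren_exp \<rho> (e + f) = ren_exp \<rho> e + ren_exp \<rho> f"
  unfolding ren_exp_eq_map_monomials by (rule map_monomials_add) auto

lemma ren_exp_single [simp]:
  "ren_exp \<rho> (Poly_Mapping.single i n) = Poly_Mapping.single (\<rho> i) n"
  unfolding ren_exp_eq_map_monomials by (rule map_monomials_single) auto

lemma ren_exp_zero [simp]: "ren_exp \<rho> 0 = 0"
  unfolding ren_exp_eq_map_monomials by simp

lemma shift_down_add: "shift_down (e + f) = shift_down e + shift_down f"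
  unfolding shift_down_eq_map_monomials by (rule map_monomials_add) auto

lemma shift_down_single [simp]:
  "shift_down (Poly_Mapping.single i n) = (if i = 0 then 0 else Poly_Mapping.single (i - 1) n)"
  unfolding shift_down_eq_map_monomials by (subst map_monomials_single) auto

lemma shift_down_zero [simp]: "shift_down 0 = 0"
  unfolding shift_down_eq_map_monomials by simp

lemma ren_add: "ren \<rho> (P + Q) = ren \<rho> P + ren \<rho> Q"
  unfolding ren_eq_map_monomials by (rule map_monomials_add) auto

lemma ren_single [simp]:
  "ren \<rho> (Poly_Mapping.single e x) = Poly_Mapping.single (ren_exp \<rho> e) x"
  unfolding ren_eq_map_monomials by (rule map_monomials_single) auto

lemma ren_zero [simp]: "ren \<rho> 0 = 0"
  unfolding ren_eq_map_monomials by simp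

lemma contract_add: "contract \<phi> (P + Q) = contract \<phi> P + contract \<phi> Q"
  unfolding contract_eq_map_monomials by (rule map_monomials_add) (auto simp: distrib_left)

lemma contract_single [simp]:
  "contract \<phi> (Poly_Mapping.single e x) =
     Poly_Mapping.single (shift_down e) (\<phi> (Poly_Mapping.lookup e 0) * x)"
  unfolding contract_eq_map_monomials by (rule map_monomials_single) auto

lemma contract_zero [simp]: "contract \<phi> 0 = 0"
  unfolding contract_eq_map_monomials by simp

lemma contract_sum: "contract \<phi> (\<Sum>i\<in>I. X i) = (\<Sum>i\<in>I. contract \<phi> (X i))"
  unfolding contract_eq_map_monomials by (rule map_monomials_sum) (auto simp: distrib_left)

lemma ren_exp_comp: "ren_exp \<sigma> (ren_exp \<rho> e) = ren_exp (\<sigma> \<circ> \<rho>) e"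
  by (rule additive_poly_mapping_eqI[where F="\<lambda>e. ren_exp \<sigma> (ren_exp \<rho> e)"])
     (auto simp: ren_exp_add)

lemma ren_comp: "ren \<sigma> (ren \<rho> P) = ren (\<sigma> \<circ> \<rho>) P"
  by (rule additive_poly_mapping_eqI[where F="\<lambda>P. ren \<sigma> (ren \<rho> P)"])
     (auto simp: ren_add ren_exp_comp comp_def)

lemma ren_exp_cong:
  "(\<And>i. i \<in> Poly_Mapping.keys e \<Longrightarrow> \<rho> i = \<rho>' i) \<Longrightarrow> ren_exp \<rho> e = ren_exp \<rho>' e"
  unfolding ren_exp_def by (rule sum.cong) auto

lemma ren_cong:
  "(\<And>e i. e \<in> Poly_Mapping.keys P \<Longrightarrow> i \<in> Poly_Mapping.keys e \<Longrightarrow> \<rho> i = \<rho>' i) \<Longrightarrow>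
   ren \<rho> P = ren \<rho>' P"
  unfolding ren_def
  by (rule sum.cong) (auto intro!: arg_cong2[where f=Poly_Mapping.single] ren_exp_cong)

definition shift_perm :: "(nat \<Rightarrow> nat) \<Rightarrow> nat \<Rightarrow> nat" where
  "shift_perm \<tau> i = (case i of 0 \<Rightarrow> 0 | Suc j \<Rightarrow> Suc (\<tau> j))"

lemma shift_perm_0 [simp]: "shift_perm \<tau> 0 = 0"
  and shift_perm_Suc [simp]: "shift_perm \<tau> (Suc j) = Suc (\<tau> j)"
  by (simp_all add: shift_perm_def)

lemma lookup_ren_exp_shift_perm_0:
  "Poly_Mapping.lookup (ren_exp (shift_perm \<tau>) e) 0 = Poly_Mapping.lookup e 0"
proof (rule additive_poly_mapping_eqI[where F="\<lambda>e. Poly_Mapping.lookup (ren_exp (shift_perm \<tau>) e) 0"])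
  fix i n
  show "Poly_Mapping.lookup (ren_exp (shift_perm \<tau>) (Poly_Mapping.single i n)) 0 =
      Poly_Mapping.lookup (Poly_Mapping.single i n) 0"
    by (cases i) (auto simp: lookup_single)
qed (auto simp: ren_exp_add lookup_add)

lemma shift_down_ren_exp_shift_perm:
  "shift_down (ren_exp (shift_perm \<tau>) e) = ren_exp \<tau> (shift_down e)"
  by (rule additive_poly_mapping_eqI[where F="\<lambda>e. shift_down (ren_exp (shift_perm \<tau>) e)"])
     (auto simp: ren_exp_add shift_down_add shift_perm_def split: nat.split)

lemma lookup_ren_exp_Suc_0: "Poly_Mapping.lookup (ren_exp (\<lambda>j. Suc (\<tau> j)) e) 0 = 0"
  by (rule additive_poly_mapping_eqI[where F="\<lambda>e. Poly_Mapping.lookup (ren_exp (\<lambda>j. Suc (\<tau> j)) e) 0"])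
     (auto simp: ren_exp_add lookup_add lookup_single)

lemma shift_down_ren_exp_Suc: "shift_down (ren_exp (\<lambda>j. Suc (\<tau> j)) e) = ren_exp \<tau> e"
  by (rule additive_poly_mapping_eqI[where F="\<lambda>e. shift_down (ren_exp (\<lambda>j. Suc (\<tau> j)) e)"])
     (auto simp: ren_exp_add shift_down_add)

lemma contract_ren_shift_perm: "contract \<phi> (ren (shift_perm \<tau>) P) = ren \<tau> (contract \<phi> P)"
  by (rule additive_poly_mapping_eqI[where F="\<lambda>P. contract \<phi> (ren (shift_perm \<tau>) P)"])
     (auto simp: ren_add contract_add lookup_ren_exp_shift_perm_0 shift_down_ren_exp_shift_perm)

text \<open>After renaming by \<open>\<lambda>j. Suc (\<tau> j)\<close> a factor no longer involves \<open>\<lambda>\<^sub>0\<close>, so it passes through the contraction.\<close>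

lemma contract_mult_ren_Suc:
  "contract \<phi> (X * ren (\<lambda>j. Suc (\<tau> j)) Q) = contract \<phi> X * ren \<tau> (Q :: 'm::comm_ring mpoly)"
proof (rule additive_poly_mapping_eqI[where F="\<lambda>X. contract \<phi> (X * ren (\<lambda>j. Suc (\<tau> j)) Q)"])
  fix e x
  show "contract \<phi> (Poly_Mapping.single e x * ren (\<lambda>j. Suc (\<tau> j)) Q) =
      contract \<phi> (Poly_Mapping.single e x) * ren \<tau> Q"
    by (rule additive_poly_mapping_eqI[where F="\<lambda>Q. contract \<phi> (Poly_Mapping.single e x * ren (\<lambda>j. Suc (\<tau> j)) Q)"])
       (auto simp: ren_add contract_add distrib_left mult_single shift_down_add lookup_add mult.assoc
          shift_down_ren_exp_Suc lookup_ren_exp_Suc_0)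
qed (auto simp: contract_add distrib_right)

lemma contract_ren_Suc_mult:
  "contract \<phi> (ren (\<lambda>j. Suc (\<tau> j)) Q * X) = ren \<tau> Q * contract \<phi> (X :: 'm::comm_ring mpoly)"
  using contract_mult_ren_Suc[of \<phi> X \<tau> Q] by (simp add: mult.commute)

section \<open>Scalar multiplication of polynomials\<close>

context vector_space
begin

lemma lookup_psmul: "Poly_Mapping.lookup (psmul scale c P) e = c *s Poly_Mapping.lookup P e"
proof -
  have "Poly_Mapping.lookup (Poly_Mapping.map f P) e = f (Poly_Mapping.lookup P e)"
    if "f 0 = 0" for f :: "'b \<Rightarrow> 'b"
    using that by transfer (auto simp: when_def)
  then show ?thesis
    unfolding psmul_def by simp
qed

lemma psmul_add: "psmul scale c (P + Q) = psmul scale c P + psmul scale c Q"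
  by (rule poly_mapping_eqI) (simp add: lookup_psmul lookup_add scale_right_distrib)

lemma psmul_add_left: "psmul scale (c + d) P = psmul scale c P + psmul scale d P"
  by (rule poly_mapping_eqI) (simp add: lookup_psmul lookup_add scale_left_distrib)

lemma psmul_zero [simp]: "psmul scale c 0 = 0"
  by (rule poly_mapping_eqI) (simp add: lookup_psmul)

lemma psmul_zero_left [simp]: "psmul scale 0 P = 0"
  by (rule poly_mapping_eqI) (simp add: lookup_psmul)

lemma psmul_one [simp]: "psmul scale 1 P = P"
  by (rule poly_mapping_eqI) (simp add: lookup_psmul)

lemma psmul_psmul: "psmul scale c (psmul scale d P) = psmul scale (c * d) P"
  by (rule poly_mapping_eqI) (simp add: lookup_psmul)

lemma psmul_minus_left: "psmul scale (- c) P = - psmul scale c P"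
  by (rule poly_mapping_eqI) (simp add: lookup_psmul)

lemma psmul_single [simp]:
  "psmul scale c (Poly_Mapping.single e x) = Poly_Mapping.single e (c *s x)"
  by (rule poly_mapping_eqI) (simp add: lookup_psmul lookup_single when_def)

lemma psmul_sum: "psmul scale c (\<Sum>i\<in>I. X i) = (\<Sum>i\<in>I. psmul scale c (X i))"
  by (induction I rule: infinite_finite_induct) (auto simp: psmul_add)

lemma psmul_sum_left: "psmul scale (\<Sum>i\<in>I. c i) P = (\<Sum>i\<in>I. psmul scale (c i) P)"
  by (induction I rule: infinite_finite_induct) (auto simp: psmul_add_left)

lemma ren_psmul: "ren \<rho> (psmul scale c P) = psmul scale c (ren \<rho> P)"
  by (rule additive_poly_mapping_eqI[where F="\<lambda>P. ren \<rho> (psmul scale c P)"])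
     (auto simp: ren_add psmul_add)

end

locale scalar_algebra = vector_space scale
  for scale :: "'f::field_char_0 \<Rightarrow> 'm::comm_ring \<Rightarrow> 'm" +
  assumes scale_mult_left: "scale c (x * y) = scale c x * y"
begin

lemma scale_mult_right: "scale c (x * y) = x * scale c y"
  using scale_mult_left[of c y x] by (simp add: mult.commute)

lemma contract_psmul: "contract \<phi> (psmul scale c P) = psmul scale c (contract \<phi> P)"
  by (rule additive_poly_mapping_eqI[where F="\<lambda>P. contract \<phi> (psmul scale c P)"])
     (auto simp: contract_add psmul_add scale_mult_right)

lemma psmul_mult: "psmul scale c P * Q = psmul scale c (P * Q)"
proof (rule additive_poly_mapping_eqI[where F="\<lambda>P. psmul scale c P * Q"])
  fix e x
  show "psmul scale c (Poly_Mapping.single e x) * Q = psmul scale c (Poly_Mapping.single e x * Q)"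
    by (rule additive_poly_mapping_eqI[where F="\<lambda>Q. psmul scale c (Poly_Mapping.single e x) * Q"])
       (auto simp: psmul_add distrib_left mult_single scale_mult_left)
qed (auto simp: psmul_add distrib_right)

lemma mult_psmul: "P * psmul scale c Q = psmul scale c (P * Q)"
  using psmul_mult[of c Q P] by (simp add: mult.commute)

end

section \<open>Permutations of \<open>{0..<n}\<close>\<close>

definition unshift_perm :: "nat \<Rightarrow> (nat \<Rightarrow> nat) \<Rightarrow> nat \<Rightarrow> nat" where
  "unshift_perm m \<sigma> x = (if x \<in> {0..<m} then \<sigma> (Suc x) - 1 else x)"

definition cycle_perm :: "nat \<Rightarrow> nat \<Rightarrow> nat" where
  "cycle_perm h i = (if i < h then Suc i else if i = h then 0 else i)"

lemma shift_perm_permutes_sign: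
  assumes "\<tau> permutes {0..<m}"
  shows "shift_perm \<tau> permutes {0..<Suc m}" "sign (shift_perm \<tau>) = sign \<tau>"
proof -
  have bij: "permutes_bij_finite \<tau> {0..<m} {Suc 0..<Suc m} Suc (\<lambda>x. x - 1)"
    unfolding permutes_bij_finite_def permutes_bij_finite_axioms_def permutes_bij_def
    using assms by (auto simp: bij_betw_def image_Suc_atLeastLessThan)
  have eq: "(\<lambda>x. if x \<in> {Suc 0..<Suc m} then Suc (\<tau> (x - 1)) else x) = shift_perm \<tau>"
  proof
    fix x
    show "(if x \<in> {Suc 0..<Suc m} then Suc (\<tau> (x - 1)) else x) = shift_perm \<tau> x"
      using permutes_not_in[OF assms] by (cases x) auto
  qed
  show "shift_perm \<tau> permutes {0..<Suc m}"
    using permutes_bij.permutes_p'[OF permutes_bij_finite.axioms(1)[OF bij]] eq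
    by (auto intro: permutes_subset)
  show "sign (shift_perm \<tau>) = sign \<tau>"
    using permutes_bij_finite.sign_p'[OF bij] eq by simp
qed

lemma unshift_perm_permutes:
  assumes "\<sigma> permutes {0..<Suc m}" "\<sigma> 0 = 0"
  shows "unshift_perm m \<sigma> permutes {0..<m}"
proof -
  have "\<sigma> permutes {Suc 0..<Suc m}"
    using assms unfolding permutes_def by (metis atLeastLessThan_iff le_0_eq not_less_eq_eq)
  then have bij: "permutes_bij \<sigma> {Suc 0..<Suc m} {0..<m} (\<lambda>x. x - 1) Suc"
    unfolding permutes_bij_def
    by (auto simp: bij_betw_def image_def inj_on_def intro!: bexI[of _ "Suc _"])
  have "(\<lambda>x. if x \<in> {0..<m} then \<sigma> (Suc x) - 1 else x) = unshift_perm m \<sigma>"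
    by (auto simp: unshift_perm_def)
  then show ?thesis
    using permutes_bij.permutes_p'[OF bij] by metis
qed

lemma shift_unshift_perm:
  assumes "\<sigma> permutes {0..<Suc m}" "\<sigma> 0 = 0"
  shows "shift_perm (unshift_perm m \<sigma>) = \<sigma>"
proof
  fix x
  show "shift_perm (unshift_perm m \<sigma>) x = \<sigma> x"
  proof (cases x)
    case (Suc y)
    show ?thesis
    proof (cases "y < m")
      case True
      have "\<sigma> (Suc y) \<noteq> 0"
        using assms permutes_inj[OF assms(1)] by (metis inj_eq nat.distinct(1))
      then show ?thesis
        using True Suc by (simp add: unshift_perm_def)
    next
      case False
      then show ?thesis
        using Suc permutes_not_in[OF assms(1)] by (simp add: unshift_perm_def)
    qed
  qed (use assms in auto)
qed

lemma unshift_shift_perm: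
  assumes "\<tau> permutes {0..<m}"
  shows "unshift_perm m (shift_perm \<tau>) = \<tau>"
  using permutes_not_in[OF assms] by (auto simp: unshift_perm_def fun_eq_iff)

lemma cycle_perm_permutes_sign:
  "cycle_perm h permutes {0..<Suc h}" "sign (cycle_perm h) = (-1) ^ h"
proof (induction h)
  case 0
  have "cycle_perm 0 = id"
    by (auto simp: cycle_perm_def fun_eq_iff)
  then show "cycle_perm 0 permutes {0..<Suc 0}" "sign (cycle_perm 0) = (-1) ^ 0"
    by (simp_all add: permutes_id)
next
  case (Suc h)
  have rec: "cycle_perm (Suc h) = Transposition.transpose 0 (Suc h) \<circ> cycle_perm h"
    by (auto simp: cycle_perm_def fun_eq_iff Transposition.transpose_def)
  have "cycle_perm h permutes {0..<Suc (Suc h)}"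
    using Suc(1) by (rule permutes_subset) auto
  then show "cycle_perm (Suc h) permutes {0..<Suc (Suc h)}"
    unfolding rec by (rule permutes_compose) (rule permutes_swap_id; simp)
  have "permutation (cycle_perm h)"
    by (rule permutes_imp_permutation[OF _ Suc(1)]) simp
  then show "sign (cycle_perm (Suc h)) = (-1) ^ Suc h"
    unfolding rec using Suc(2)
    by (subst sign_compose) (simp_all add: permutation_swap_id sign_swap_id)
qed

lemma sign_comp_transpose:
  assumes "\<sigma> permutes {0..<n::nat}" "a \<noteq> b"
  shows "sign (\<sigma> \<circ> Transposition.transpose a b) = - sign \<sigma>"
proof -
  have "permutation \<sigma>"
    by (rule permutes_imp_permutation[OF _ assms(1)]) simp
  then have "sign (\<sigma> \<circ> Transposition.transpose a b) = sign \<sigma> * sign (Transposition.transpose a b)"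
    by (rule sign_compose) (rule permutation_swap_id)
  then show ?thesis
    using assms(2) by (simp add: sign_swap_id)
qed

lemma sum_permutes_by_preimage_0:
  fixes g :: "(nat \<Rightarrow> nat) \<Rightarrow> 'b::comm_monoid_add"
  assumes "0 < n"
  shows "(\<Sum>\<sigma>\<in>{\<sigma>. \<sigma> permutes {0..<n}}. g \<sigma>) =
    (\<Sum>p<n. \<Sum>\<sigma>\<in>{\<sigma>. \<sigma> permutes {0..<n} \<and> \<sigma> p = 0}. g \<sigma>)"
proof -
  let ?P = "{\<sigma>. \<sigma> permutes {0..<n}}"
  have fin: "finite ?P"
    by (rule finite_permutations) simp
  have "(\<Sum>\<sigma>\<in>{\<sigma>. \<sigma> permutes {0..<n} \<and> \<sigma> p = 0}. g \<sigma>) =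
      (\<Sum>\<sigma>\<in>?P. if \<sigma> p = 0 then g \<sigma> else 0)" for p
  proof -
    have "{\<sigma>. \<sigma> permutes {0..<n} \<and> \<sigma> p = 0} = {\<sigma>\<in>?P. \<sigma> p = 0}"
      by auto
    then show ?thesis
      using sum.inter_filter[OF fin, of g "\<lambda>\<sigma>. \<sigma> p = 0"] by simp
  qed
  then have "(\<Sum>p<n. \<Sum>\<sigma>\<in>{\<sigma>. \<sigma> permutes {0..<n} \<and> \<sigma> p = 0}. g \<sigma>) =
      (\<Sum>\<sigma>\<in>?P. \<Sum>p<n. if \<sigma> p = 0 then g \<sigma> else 0)"
    by (simp add: sum.swap[of _ "{..<n}"])
  also have "\<dots> = (\<Sum>\<sigma>\<in>?P. g \<sigma>)"
  proof (rule sum.cong[OF refl])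
    fix \<sigma>
    assume "\<sigma> \<in> ?P"
    then have \<sigma>: "\<sigma> permutes {0..<n}"
      by simp
    have "(\<Sum>p<n. if \<sigma> p = 0 then g \<sigma> else 0) = (\<Sum>p<n. if p = inv \<sigma> 0 then g \<sigma> else 0)"
      by (rule sum.cong[OF refl]) (metis permutes_inv_eq[OF \<sigma>])
    also have "\<dots> = g \<sigma>"
      using permutes_in_image[OF permutes_inv[OF \<sigma>], of 0] assms by (simp add: sum.delta)
    finally show "(\<Sum>p<n. if \<sigma> p = 0 then g \<sigma> else 0) = g \<sigma>" .
  qed
  finally show ?thesis
    by simp
qed

lemma sum_permutes_preimage_0_transpose:
  fixes g :: "(nat \<Rightarrow> nat) \<Rightarrow> 'b::comm_monoid_add"
  assumes "p0 < n" "p < n"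
    and "\<And>\<sigma>. \<sigma> permutes {0..<n} \<Longrightarrow> g (\<sigma> \<circ> Transposition.transpose p0 p) = g \<sigma>"
  shows "(\<Sum>\<sigma>\<in>{\<sigma>. \<sigma> permutes {0..<n} \<and> \<sigma> p = 0}. g \<sigma>) =
    (\<Sum>\<sigma>\<in>{\<sigma>. \<sigma> permutes {0..<n} \<and> \<sigma> p0 = 0}. g \<sigma>)"
proof -
  let ?t = "Transposition.transpose p0 p"
  have t: "?t permutes {0..<n}"
    using assms by (intro permutes_swap_id) auto
  have tt: "\<sigma> \<circ> ?t \<circ> ?t = \<sigma>" for \<sigma> :: "nat \<Rightarrow> nat"
    by (simp add: comp_assoc transpose_comp_involutory)
  show ?thesis
    by (rule sum.reindex_bij_witness[where i="\<lambda>\<sigma>. \<sigma> \<circ> ?t" and j="\<lambda>\<sigma>. \<sigma> \<circ> ?t"])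
       (auto simp: tt assms(3) intro: permutes_compose[OF t])
qed

lemma sum_permutes_fixing_0:
  "(\<Sum>\<sigma>\<in>{\<sigma>. \<sigma> permutes {0..<Suc m} \<and> \<sigma> 0 = 0}. g \<sigma>) =
   (\<Sum>\<tau>\<in>{\<tau>. \<tau> permutes {0..<m}}. g (shift_perm \<tau>))"
  by (rule sum.reindex_bij_witness[where i=shift_perm and j="unshift_perm m"])
     (auto simp: shift_unshift_perm unshift_shift_perm unshift_perm_permutes shift_perm_permutes_sign)

lemma sum_permutes_preimage_0_cycle:
  assumes "h \<le> m"
  shows "(\<Sum>\<sigma>\<in>{\<sigma>. \<sigma> permutes {0..<Suc m} \<and> \<sigma> h = 0}. g \<sigma>) =
    (\<Sum>\<tau>\<in>{\<tau>. \<tau> permutes {0..<m}}. g (shift_perm \<tau> \<circ> cycle_perm h))"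
proof -
  have c: "cycle_perm h permutes {0..<Suc m}"
    by (rule permutes_subset[OF cycle_perm_permutes_sign(1)]) (use assms in auto)
  have "(\<Sum>\<sigma>\<in>{\<sigma>. \<sigma> permutes {0..<Suc m} \<and> \<sigma> h = 0}. g \<sigma>) =
      (\<Sum>\<sigma>\<in>{\<sigma>. \<sigma> permutes {0..<Suc m} \<and> \<sigma> 0 = 0}. g (\<sigma> \<circ> cycle_perm h))"
  proof (rule sum.reindex_bij_witness[where i="\<lambda>\<sigma>. \<sigma> \<circ> cycle_perm h" and j="\<lambda>\<sigma>. \<sigma> \<circ> inv (cycle_perm h)"])
    have "inv (cycle_perm h) 0 = h"
      using permutes_inv_eq[OF c] by (simp add: cycle_perm_def)
    then show "\<sigma> \<circ> inv (cycle_perm h) \<in> {\<sigma>. \<sigma> permutes {0..<Suc m} \<and> \<sigma> 0 = 0}"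
      if "\<sigma> \<in> {\<sigma>. \<sigma> permutes {0..<Suc m} \<and> \<sigma> h = 0}" for \<sigma>
      using that permutes_compose[OF permutes_inv[OF c]] by auto
  qed (use c permutes_compose[OF c] in \<open>auto simp: comp_assoc permutes_inv_o cycle_perm_def\<close>)
  also have "\<dots> = (\<Sum>\<tau>\<in>{\<tau>. \<tau> permutes {0..<m}}. g (shift_perm \<tau> \<circ> cycle_perm h))"
    by (rule sum_permutes_fixing_0)
  finally show ?thesis .
qed

lemma sum_lessThan_add: "(\<Sum>p<h + (k::nat). f p) = (\<Sum>p<h. f p) + (\<Sum>j<k. f (h + j))"
  by (induction k) (auto simp: add.assoc)

lemma of_nat_mult_div_fact:
  assumes "0 < n"
  shows "of_nat n * (c / (fact n * d)) = c / (fact (n - 1) * d :: 'f::field_char_0)"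
  using assms by (simp add: fact_reduce[OF assms])
section \<open>Contraction of an exterior product\<close>

lemma Gamma_keys:
  "\<alpha> \<in> Gamma sA DA sM h \<Longrightarrow> length bs = h \<Longrightarrow> e \<in> Poly_Mapping.keys (\<alpha> bs) \<Longrightarrow>
   Poly_Mapping.keys e \<subseteq> {0..<h}"
  unfolding Gamma_def by blast

lemma Gamma_skew:
  "\<alpha> \<in> Gamma sA DA sM h \<Longrightarrow> length bs = h \<Longrightarrow> \<rho> permutes {0..<h} \<Longrightarrow>
   ren \<rho> (\<alpha> (map (\<lambda>i. bs ! \<rho> i) [0..<h])) = psmul sM (of_int (sign \<rho>)) (\<alpha> bs)"
  unfolding Gamma_def by blast

definition wedge_term :: "('f::field_char_0 \<Rightarrow> 'm::comm_ring \<Rightarrow> 'm) \<Rightarrow> nat \<Rightarrow> nat \<Rightarrow>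
   ('a list \<Rightarrow> 'm mpoly) \<Rightarrow> ('a list \<Rightarrow> 'm mpoly) \<Rightarrow> 'a list \<Rightarrow> (nat \<Rightarrow> nat) \<Rightarrow> 'm mpoly"
where
  "wedge_term sM h k \<alpha> \<beta> as \<sigma> = psmul sM (of_int (sign \<sigma>) / (fact h * fact k))
     (ren \<sigma> (\<alpha> (map (\<lambda>i. as ! \<sigma> i) [0..<h])) *
      ren (\<lambda>j. \<sigma> (h + j)) (\<beta> (map (\<lambda>j. as ! \<sigma> (h + j)) [0..<k])))"

lemma wedge_eq_sum_wedge_term:
  "wedge sM h k \<alpha> \<beta> as = (\<Sum>\<sigma>\<in>{\<sigma>. \<sigma> permutes {0..<h + k}}. wedge_term sM h k \<alpha> \<beta> as \<sigma>)"
  by (simp add: wedge_def wedge_term_def)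

context scalar_algebra
begin

lemma wedge_term_transpose_left:
  assumes \<alpha>: "\<alpha> \<in> Gamma sA DA scale h" and "p < h" and \<sigma>: "\<sigma> permutes {0..<h + k}"
  shows "wedge_term scale h k \<alpha> \<beta> as (\<sigma> \<circ> Transposition.transpose 0 p) = wedge_term scale h k \<alpha> \<beta> as \<sigma>"
proof (cases "p = 0")
  case False
  let ?t = "Transposition.transpose 0 p"
  let ?bs = "map (\<lambda>i. as ! \<sigma> i) [0..<h]"
  have t: "?t permutes {0..<h}"
    using \<open>p < h\<close> by (intro permutes_swap_id) auto
  have bs_eq: "map (\<lambda>i. as ! (\<sigma> \<circ> ?t) i) [0..<h] = map (\<lambda>i. ?bs ! ?t i) [0..<h]"
    by (rule nth_equalityI) (use permutes_in_image[OF t] in auto)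
  have ren_\<alpha>: "ren (\<sigma> \<circ> ?t) (\<alpha> (map (\<lambda>i. as ! (\<sigma> \<circ> ?t) i) [0..<h])) =
      psmul scale (-1) (ren \<sigma> (\<alpha> ?bs))"
    unfolding bs_eq ren_comp[symmetric] using Gamma_skew[OF \<alpha> _ t, of ?bs] False
    by (simp add: ren_psmul sign_swap_id)
  have "(\<sigma> \<circ> ?t) (h + j) = \<sigma> (h + j)" for j
    using \<open>p < h\<close> by (simp add: Transposition.transpose_def)
  then show ?thesis
    unfolding wedge_term_def ren_\<alpha> sign_comp_transpose[OF \<sigma> False[symmetric]] psmul_mult psmul_psmul
    by simp
qed simp

lemma wedge_term_transpose_right:
  assumes \<alpha>: "\<alpha> \<in> Gamma sA DA scale h" and \<beta>: "\<beta> \<in> Gamma sA DA scale k"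
    and "j < k" and \<sigma>: "\<sigma> permutes {0..<h + k}"
  shows "wedge_term scale h k \<alpha> \<beta> as (\<sigma> \<circ> Transposition.transpose h (h + j)) =
    wedge_term scale h k \<alpha> \<beta> as \<sigma>"
proof (cases "j = 0")
  case False
  let ?t = "Transposition.transpose h (h + j)"
  let ?t' = "Transposition.transpose 0 j"
  let ?as = "map (\<lambda>i. as ! \<sigma> i) [0..<h]"
  let ?bs = "map (\<lambda>i. as ! \<sigma> (h + i)) [0..<k]"
  have t': "?t' permutes {0..<k}"
    using \<open>j < k\<close> by (intro permutes_swap_id) auto
  have t_left: "?t i = i" if "i < h" for i
    using that by (simp add: Transposition.transpose_def)
  have t_right: "?t (h + i) = h + ?t' i" for i
    by (simp add: Transposition.transpose_def)
  have as_eq: "map (\<lambda>i. as ! (\<sigma> \<circ> ?t) i) [0..<h] = ?as"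
    by (rule nth_equalityI) (auto simp: t_left)
  have ren_\<alpha>: "ren (\<sigma> \<circ> ?t) (\<alpha> ?as) = ren \<sigma> (\<alpha> ?as)"
  proof (rule ren_cong)
    fix e i
    assume "e \<in> Poly_Mapping.keys (\<alpha> ?as)" "i \<in> Poly_Mapping.keys e"
    then have "i < h"
      using Gamma_keys[OF \<alpha>, of ?as e] by auto
    then show "(\<sigma> \<circ> ?t) i = \<sigma> i"
      by (simp add: t_left)
  qed
  have shift_eq: "(\<lambda>i. (\<sigma> \<circ> ?t) (h + i)) = (\<lambda>i. \<sigma> (h + i)) \<circ> ?t'"
    by (simp add: fun_eq_iff t_right)
  have bs_eq: "map (\<lambda>i. as ! (\<sigma> \<circ> ?t) (h + i)) [0..<k] = map (\<lambda>i. ?bs ! ?t' i) [0..<k]"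
    by (rule nth_equalityI) (use permutes_in_image[OF t'] in \<open>auto simp: t_right\<close>)
  have ren_\<beta>: "ren (\<lambda>i. (\<sigma> \<circ> ?t) (h + i)) (\<beta> (map (\<lambda>i. as ! (\<sigma> \<circ> ?t) (h + i)) [0..<k])) =
      psmul scale (-1) (ren (\<lambda>i. \<sigma> (h + i)) (\<beta> ?bs))"
    unfolding bs_eq shift_eq ren_comp[symmetric] using Gamma_skew[OF \<beta> _ t', of ?bs] False
    by (simp add: ren_psmul sign_swap_id)
  have "sign (\<sigma> \<circ> ?t) = - sign \<sigma>"
    using sign_comp_transpose[OF \<sigma>, of h "h + j"] False by simp
  then show ?thesis
    unfolding wedge_term_def ren_\<beta> as_eq ren_\<alpha> mult_psmul psmul_psmul by simp
qed simp

lemma wedge_eq_sums_by_preimage_0: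
  assumes \<alpha>: "\<alpha> \<in> Gamma sA DA scale h" and \<beta>: "\<beta> \<in> Gamma sA DA scale k" and "0 < h + k"
  shows "wedge scale h k \<alpha> \<beta> as =
    (\<Sum>_<h. \<Sum>\<sigma>\<in>{\<sigma>. \<sigma> permutes {0..<h + k} \<and> \<sigma> 0 = 0}. wedge_term scale h k \<alpha> \<beta> as \<sigma>) +
    (\<Sum>_<k. \<Sum>\<sigma>\<in>{\<sigma>. \<sigma> permutes {0..<h + k} \<and> \<sigma> h = 0}. wedge_term scale h k \<alpha> \<beta> as \<sigma>)"
proof -
  let ?S = "\<lambda>p. \<Sum>\<sigma>\<in>{\<sigma>. \<sigma> permutes {0..<h + k} \<and> \<sigma> p = 0}. wedge_term scale h k \<alpha> \<beta> as \<sigma>"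
  have "wedge scale h k \<alpha> \<beta> as = (\<Sum>p<h. ?S p) + (\<Sum>j<k. ?S (h + j))"
    unfolding wedge_eq_sum_wedge_term sum_permutes_by_preimage_0[OF \<open>0 < h + k\<close>]
    by (rule sum_lessThan_add)
  also have "(\<Sum>p<h. ?S p) = (\<Sum>_<h. ?S 0)"
    by (intro sum.cong refl sum_permutes_preimage_0_transpose)
       (auto intro: wedge_term_transpose_left[OF \<alpha>])
  also have "(\<Sum>j<k. ?S (h + j)) = (\<Sum>_<k. ?S h)"
    by (intro sum.cong refl sum_permutes_preimage_0_transpose)
       (auto intro: wedge_term_transpose_right[OF \<alpha> \<beta>])
  finally show ?thesis .
qed

lemma contract_wedge_term_shift_perm:
  assumes \<tau>: "\<tau> permutes {0..<m}" and "0 < h"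
  shows "contract \<phi> (wedge_term scale h k \<alpha> \<beta> (a # as) (shift_perm \<tau>)) =
    psmul scale (of_int (sign \<tau>) / (fact h * fact k))
      (ren \<tau> (contract \<phi> (\<alpha> (a # map (\<lambda>i. as ! \<tau> i) [0..<h - 1]))) *
       ren (\<lambda>j. \<tau> (h - 1 + j)) (\<beta> (map (\<lambda>j. as ! \<tau> (h - 1 + j)) [0..<k])))"
proof -
  have as_eq: "map (\<lambda>i. (a # as) ! shift_perm \<tau> i) [0..<h] = a # map (\<lambda>i. as ! \<tau> i) [0..<h - 1]"
  proof (rule nth_equalityI)
    fix i
    assume "i < length (map (\<lambda>i. (a # as) ! shift_perm \<tau> i) [0..<h])"
    then show "map (\<lambda>i. (a # as) ! shift_perm \<tau> i) [0..<h] ! i = (a # map (\<lambda>i. as ! \<tau> i) [0..<h - 1]) ! i"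
      by (cases i) auto
  qed (use \<open>0 < h\<close> in auto)
  have right: "shift_perm \<tau> (h + j) = Suc (\<tau> (h - 1 + j))" for j
    using \<open>0 < h\<close> by (cases h) auto
  then have right_fun: "(\<lambda>j. shift_perm \<tau> (h + j)) = (\<lambda>j. Suc (\<tau> (h - 1 + j)))"
    by simp
  show ?thesis
    unfolding wedge_term_def shift_perm_permutes_sign(2)[OF \<tau>] as_eq right_fun right nth_Cons_Suc
      contract_psmul contract_mult_ren_Suc contract_ren_shift_perm ..
qed

lemma contract_wedge_term_cycle_perm:
  assumes \<tau>: "\<tau> permutes {0..<m}" and "0 < k" "h \<le> m" and \<alpha>: "\<alpha> \<in> Gamma sA DA scale h"
  shows "contract \<phi> (wedge_term scale h k \<alpha> \<beta> (a # as) (shift_perm \<tau> \<circ> cycle_perm h)) =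
    psmul scale ((-1) ^ h * of_int (sign \<tau>) / (fact h * fact k))
      (ren \<tau> (\<alpha> (map (\<lambda>i. as ! \<tau> i) [0..<h])) *
       ren (\<lambda>j. \<tau> (h + j)) (contract \<phi> (\<beta> (a # map (\<lambda>j. as ! \<tau> (h + j)) [0..<k - 1]))))"
proof -
  let ?\<sigma> = "shift_perm \<tau> \<circ> cycle_perm h"
  let ?as = "map (\<lambda>i. as ! \<tau> i) [0..<h]"
  have left: "?\<sigma> i = Suc (\<tau> i)" if "i < h" for i
    using that by (simp add: cycle_perm_def)
  have right_fun: "(\<lambda>j. ?\<sigma> (h + j)) = shift_perm (\<lambda>j. \<tau> (h + j))"
    by (rule ext, case_tac j) (auto simp: cycle_perm_def)
  have "sign ?\<sigma> = sign (shift_perm \<tau>) * sign (cycle_perm h)"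
  proof (rule sign_compose)
    show "permutation (shift_perm \<tau>)"
      by (rule permutes_imp_permutation[OF _ shift_perm_permutes_sign(1)[OF \<tau>]]) simp
    show "permutation (cycle_perm h)"
      by (rule permutes_imp_permutation[OF _ cycle_perm_permutes_sign(1)]) simp
  qed
  then have sign_\<sigma>: "sign ?\<sigma> = sign \<tau> * (-1) ^ h"
    by (simp add: shift_perm_permutes_sign(2)[OF \<tau>] cycle_perm_permutes_sign(2))
  have as_eq: "map (\<lambda>i. (a # as) ! ?\<sigma> i) [0..<h] = ?as"
    by (rule nth_equalityI) (auto simp: cycle_perm_def)
  have ren_\<alpha>: "ren ?\<sigma> (\<alpha> ?as) = ren (\<lambda>i. Suc (\<tau> i)) (\<alpha> ?as)"
  proof (rule ren_cong)
    fix e i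
    assume "e \<in> Poly_Mapping.keys (\<alpha> ?as)" "i \<in> Poly_Mapping.keys e"
    then have "i < h"
      using Gamma_keys[OF \<alpha>, of ?as e] by auto
    then show "?\<sigma> i = Suc (\<tau> i)"
      by (rule left)
  qed
  have bs_eq: "map (\<lambda>j. (a # as) ! ?\<sigma> (h + j)) [0..<k] = a # map (\<lambda>j. as ! \<tau> (h + j)) [0..<k - 1]"
  proof (rule nth_equalityI)
    fix i
    assume "i < length (map (\<lambda>j. (a # as) ! ?\<sigma> (h + j)) [0..<k])"
    then show "map (\<lambda>j. (a # as) ! ?\<sigma> (h + j)) [0..<k] ! i =
        (a # map (\<lambda>j. as ! \<tau> (h + j)) [0..<k - 1]) ! i"
      by (cases i) (auto simp: cycle_perm_def)
  qed (use \<open>0 < k\<close> in auto)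
  show ?thesis
    unfolding wedge_term_def sign_\<sigma> as_eq ren_\<alpha> bs_eq right_fun contract_psmul
      contract_ren_Suc_mult contract_ren_shift_perm
    by (simp add: mult.commute)
qed

lemma contract_sum_wedge_terms_fixing_0:
  assumes "0 < h" "h + k = Suc (length as)"
  shows "(\<Sum>_<h. contract \<phi> (\<Sum>\<sigma>\<in>{\<sigma>. \<sigma> permutes {0..<h + k} \<and> \<sigma> 0 = 0}. wedge_term scale h k \<alpha> \<beta> (a # as) \<sigma>)) =
    wedge scale (h - 1) k (\<lambda>bs. contract \<phi> (\<alpha> (a # bs))) \<beta> as"
proof -
  let ?c = "\<lambda>\<tau>. of_int (sign \<tau>) / (fact h * fact k) :: 'f"
  let ?Z = "\<lambda>\<tau>. ren \<tau> (contract \<phi> (\<alpha> (a # map (\<lambda>i. as ! \<tau> i) [0..<h - 1]))) *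
    ren (\<lambda>j. \<tau> (h - 1 + j)) (\<beta> (map (\<lambda>j. as ! \<tau> (h - 1 + j)) [0..<k]))"
  have "contract \<phi> (\<Sum>\<sigma>\<in>{\<sigma>. \<sigma> permutes {0..<h + k} \<and> \<sigma> 0 = 0}. wedge_term scale h k \<alpha> \<beta> (a # as) \<sigma>) =
      (\<Sum>\<tau>\<in>{\<tau>. \<tau> permutes {0..<length as}}. psmul scale (?c \<tau>) (?Z \<tau>))"
    unfolding assms(2) sum_permutes_fixing_0 contract_sum
    by (intro sum.cong refl) (simp add: contract_wedge_term_shift_perm[OF _ \<open>0 < h\<close>])
  then have "(\<Sum>_<h. contract \<phi> (\<Sum>\<sigma>\<in>{\<sigma>. \<sigma> permutes {0..<h + k} \<and> \<sigma> 0 = 0}. wedge_term scale h k \<alpha> \<beta> (a # as) \<sigma>)) =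
      (\<Sum>\<tau>\<in>{\<tau>. \<tau> permutes {0..<length as}}. \<Sum>_<h. psmul scale (?c \<tau>) (?Z \<tau>))"
    by (simp only: sum.swap[of _ "{..<h}"])
  also have "\<dots> = (\<Sum>\<tau>\<in>{\<tau>. \<tau> permutes {0..<length as}}. psmul scale (of_nat h * ?c \<tau>) (?Z \<tau>))"
    unfolding psmul_sum_left[symmetric] sum_constant card_lessThan ..
  also have "\<dots> = wedge scale (h - 1) k (\<lambda>bs. contract \<phi> (\<alpha> (a # bs))) \<beta> as"
    unfolding of_nat_mult_div_fact[OF \<open>0 < h\<close>] using assms by (simp add: wedge_def)
  finally show ?thesis .
qed

lemma contract_sum_wedge_terms_preimage_0_at_h:
  assumes "0 < k" "h + k = Suc (length as)" and \<alpha>: "\<alpha> \<in> Gamma sA DA scale h"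
  shows "(\<Sum>_<k. contract \<phi> (\<Sum>\<sigma>\<in>{\<sigma>. \<sigma> permutes {0..<h + k} \<and> \<sigma> h = 0}. wedge_term scale h k \<alpha> \<beta> (a # as) \<sigma>)) =
    psmul scale ((-1) ^ h) (wedge scale h (k - 1) \<alpha> (\<lambda>bs. contract \<phi> (\<beta> (a # bs))) as)"
proof -
  have "h \<le> length as"
    using assms by simp
  let ?c = "\<lambda>\<tau>. (-1) ^ h * of_int (sign \<tau>) / (fact h * fact k) :: 'f"
  let ?Z = "\<lambda>\<tau>. ren \<tau> (\<alpha> (map (\<lambda>i. as ! \<tau> i) [0..<h])) *
    ren (\<lambda>j. \<tau> (h + j)) (contract \<phi> (\<beta> (a # map (\<lambda>j. as ! \<tau> (h + j)) [0..<k - 1])))"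
  have "contract \<phi> (\<Sum>\<sigma>\<in>{\<sigma>. \<sigma> permutes {0..<h + k} \<and> \<sigma> h = 0}. wedge_term scale h k \<alpha> \<beta> (a # as) \<sigma>) =
      (\<Sum>\<tau>\<in>{\<tau>. \<tau> permutes {0..<length as}}. psmul scale (?c \<tau>) (?Z \<tau>))"
    unfolding assms(2) sum_permutes_preimage_0_cycle[OF \<open>h \<le> length as\<close>] contract_sum
    by (intro sum.cong refl)
       (simp add: contract_wedge_term_cycle_perm[OF _ \<open>0 < k\<close> \<open>h \<le> length as\<close> \<alpha>])
  then have "(\<Sum>_<k. contract \<phi> (\<Sum>\<sigma>\<in>{\<sigma>. \<sigma> permutes {0..<h + k} \<and> \<sigma> h = 0}. wedge_term scale h k \<alpha> \<beta> (a # as) \<sigma>)) =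
      (\<Sum>\<tau>\<in>{\<tau>. \<tau> permutes {0..<length as}}. \<Sum>_<k. psmul scale (?c \<tau>) (?Z \<tau>))"
    by (simp only: sum.swap[of _ "{..<k}"])
  also have "\<dots> = (\<Sum>\<tau>\<in>{\<tau>. \<tau> permutes {0..<length as}}. psmul scale (of_nat k * ?c \<tau>) (?Z \<tau>))"
    unfolding psmul_sum_left[symmetric] sum_constant card_lessThan ..
  also have "\<dots> = (\<Sum>\<tau>\<in>{\<tau>. \<tau> permutes {0..<length as}}.
      psmul scale ((-1) ^ h) (psmul scale (of_int (sign \<tau>) / (fact h * fact (k - 1))) (?Z \<tau>)))"
  proof (intro sum.cong refl)
    fix \<tau> :: "nat \<Rightarrow> nat"
    have "of_nat k * ?c \<tau> = (-1) ^ h * (of_int (sign \<tau>) / (fact h * fact (k - 1)))"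
      using of_nat_mult_div_fact[OF \<open>0 < k\<close>, of "(-1) ^ h * of_int (sign \<tau>)" "fact h"]
      by (simp add: mult.commute)
    then show "psmul scale (of_nat k * ?c \<tau>) (?Z \<tau>) =
        psmul scale ((-1) ^ h) (psmul scale (of_int (sign \<tau>) / (fact h * fact (k - 1))) (?Z \<tau>))"
      by (simp add: psmul_psmul)
  qed
  also have "\<dots> = psmul scale ((-1) ^ h) (wedge scale h (k - 1) \<alpha> (\<lambda>bs. contract \<phi> (\<beta> (a # bs))) as)"
    using assms by (simp add: wedge_def psmul_sum)
  finally show ?thesis .
qed

lemma contract_wedge:
  assumes \<alpha>: "\<alpha> \<in> Gamma sA DA scale h" and \<beta>: "\<beta> \<in> Gamma sA DA scale k"
    and hk: "h + k = Suc (length as)"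
  shows "contract \<phi> (wedge scale h k \<alpha> \<beta> (a # as)) =
    (if h = 0 then 0 else wedge scale (h - 1) k (\<lambda>bs. contract \<phi> (\<alpha> (a # bs))) \<beta> as) +
    (if k = 0 then 0
     else psmul scale ((-1) ^ h) (wedge scale h (k - 1) \<alpha> (\<lambda>bs. contract \<phi> (\<beta> (a # bs))) as))"
proof -
  have "0 < h + k"
    using hk by simp
  have "contract \<phi> (wedge scale h k \<alpha> \<beta> (a # as)) =
      (\<Sum>_<h. contract \<phi> (\<Sum>\<sigma>\<in>{\<sigma>. \<sigma> permutes {0..<h + k} \<and> \<sigma> 0 = 0}. wedge_term scale h k \<alpha> \<beta> (a # as) \<sigma>)) +
      (\<Sum>_<k. contract \<phi> (\<Sum>\<sigma>\<in>{\<sigma>. \<sigma> permutes {0..<h + k} \<and> \<sigma> h = 0}. wedge_term scale h k \<alpha> \<beta> (a # as) \<sigma>))"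
    unfolding wedge_eq_sums_by_preimage_0[OF \<alpha> \<beta> \<open>0 < h + k\<close>] contract_add
      contract_sum[where I="{..<h}"] contract_sum[where I="{..<k}"] ..
  also have "(\<Sum>_<h. contract \<phi> (\<Sum>\<sigma>\<in>{\<sigma>. \<sigma> permutes {0..<h + k} \<and> \<sigma> 0 = 0}. wedge_term scale h k \<alpha> \<beta> (a # as) \<sigma>)) =
      (if h = 0 then 0 else wedge scale (h - 1) k (\<lambda>bs. contract \<phi> (\<alpha> (a # bs))) \<beta> as)"
    using contract_sum_wedge_terms_fixing_0[OF _ hk] by simp
  also have "(\<Sum>_<k. contract \<phi> (\<Sum>\<sigma>\<in>{\<sigma>. \<sigma> permutes {0..<h + k} \<and> \<sigma> h = 0}. wedge_term scale h k \<alpha> \<beta> (a # as) \<sigma>)) =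
      (if k = 0 then 0
       else psmul scale ((-1) ^ h) (wedge scale h (k - 1) \<alpha> (\<lambda>bs. contract \<phi> (\<beta> (a # bs))) as))"
    using contract_sum_wedge_terms_preimage_0_at_h[OF _ hk \<alpha>] by simp
  finally show ?thesis .
qed

lemma wedge_add_left:
  "wedge scale h k (\<lambda>bs. f bs + g bs) \<beta> as = wedge scale h k f \<beta> as + wedge scale h k g \<beta> as"
  by (simp add: wedge_def ren_add distrib_right psmul_add sum.distrib)

lemma wedge_add_right:
  "wedge scale h k \<alpha> (\<lambda>bs. f bs + g bs) as = wedge scale h k \<alpha> f as + wedge scale h k \<alpha> g as"
  by (simp add: wedge_def ren_add distrib_left psmul_add sum.distrib)

lemma wedge_zero_left: "wedge scale h k (\<lambda>bs. 0) \<beta> as = 0"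
  by (simp add: wedge_def)

lemma wedge_zero_right: "wedge scale h k \<alpha> (\<lambda>bs. 0) as = 0"
  by (simp add: wedge_def)

lemma sum_list_contract_wedge:
  assumes "\<alpha> \<in> Gamma sA DA scale h" "\<beta> \<in> Gamma sA DA scale k" "h + k = Suc (length as)"
  shows "(\<Sum>(a, \<phi>)\<leftarrow>\<xi>. contract \<phi> (wedge scale h k \<alpha> \<beta> (a # as))) =
    (if h = 0 then 0 else wedge scale (h - 1) k (\<lambda>bs. \<Sum>(a, \<phi>)\<leftarrow>\<xi>. contract \<phi> (\<alpha> (a # bs))) \<beta> as) +
    (if k = 0 then 0
     else psmul scale ((-1) ^ h) (wedge scale h (k - 1) \<alpha> (\<lambda>bs. \<Sum>(a, \<phi>)\<leftarrow>\<xi>. contract \<phi> (\<beta> (a # bs))) as))"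
proof (induction \<xi>)
  case Nil
  then show ?case
    by (simp add: wedge_zero_left wedge_zero_right)
next
  case (Cons x \<xi>)
  obtain a \<phi> where x: "x = (a, \<phi>)"
    by (cases x)
  show ?case
    unfolding x list.map sum_list.Cons prod.case Cons.IH contract_wedge[OF assms, of \<phi> a]
      wedge_add_left wedge_add_right psmul_add
    by (simp add: algebra_simps)
qed

end

theorem proposition3p25:
  fixes sA :: "'f::field_char_0 \<Rightarrow> 'a::ab_group_add \<Rightarrow> 'a"
    and DA :: "'a \<Rightarrow> 'a"
    and br :: "'a \<Rightarrow> 'a \<Rightarrow> (nat \<Rightarrow>\<^sub>0 'a)"
    and sM :: "'f \<Rightarrow> 'm::comm_ring \<Rightarrow> 'm"
    and DM :: "'m \<Rightarrow> 'm"
    and act :: "'a \<Rightarrow> 'm \<Rightarrow> (nat \<Rightarrow>\<^sub>0 'm)"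
    and \<xi> :: "('a \<times> (nat \<Rightarrow> 'm)) list"
    and \<alpha> \<beta> :: "'a list \<Rightarrow> 'm mpoly"
    and h k :: nat
    and as :: "'a list"
  assumes "lie_conformal_algebra sA DA br"
    and "lca_module sA DA br sM DM act"
    and "derivation_product sM DM act"
    and "\<alpha> \<in> Gamma sA DA sM h"
    and "\<beta> \<in> Gamma sA DA sM k"
    and "Suc (length as) = h + k"
  shows "iota (h + k) \<xi> (wedge sM h k \<alpha> \<beta>) as =
           (if h = 0 then 0 else wedge sM (h - 1) k (iota h \<xi> \<alpha>) \<beta> as) +
           (if k = 0 then 0
            else if even h then wedge sM h (k - 1) \<alpha> (iota k \<xi> \<beta>) as
            else - wedge sM h (k - 1) \<alpha> (iota k \<xi> \<beta>) as)"
proof -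
  interpret scalar_algebra sM
    using assms(2,3)
    by (simp add: scalar_algebra_def scalar_algebra_axioms_def lca_module_def derivation_product_def)
  have iota_nonzero: "n \<noteq> 0 \<Longrightarrow> iota n \<xi> \<gamma> = (\<lambda>bs. \<Sum>(a, \<phi>)\<leftarrow>\<xi>. contract \<phi> (\<gamma> (a # bs)))"
    for n \<gamma> by (simp add: iota_def fun_eq_iff)
  have sign: "psmul sM ((-1) ^ h) X = (if even h then X else - X)" for X
    by (simp add: psmul_minus_left)
  show ?thesis
    using sum_list_contract_wedge[OF assms(4,5) assms(6)[symmetric], of \<xi>] assms(6)
    by (cases "h = 0"; cases "k = 0") (simp_all add: iota_nonzero sign)
qed

end
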